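(* Let $\tau(s,t)$, $\mathcal F:=\log\tau$, satisfy, as an identity of formal series in $z_1^{-1},z_2^{-1}$, $$z_1\exp\Bigl(-\sum_{n\ge1}\frac1n\frac{\partial^2\mathcal F}{\partial s\partial t_n}z_1^{-n}\Bigr)-z_2\exp\Bigl(-\sum_{n\ge1}\frac1n\frac{\partial^2\mathcal F}{\partial s\partial t_n}z_2^{-n}\Bigr)=(z_1-z_2)\exp\Bigl(\sum_{m,n\ge1}\frac1{mn}\frac{\partial^2\mathcal F}{\partial t_m\partial t_n}z_1^{-m}z_2^{-n}\Bigr).$$ Let $\mathcal L(k;s,t)$ be the formal inverse series of $\mathsf k(z;s,t):=z\exp\bigl(-\sum_{n\ge1}\frac1n\frac{\partial^2\mathcal F}{\partial t_n\partial s}z^{-n}\bigr)$, and let $\mathcal P(k;s,t):=k\exp\bigl(-\frac{\partial^2\mathcal F}{\partial s^2}\bigr)$. Then $(\mathcal L,\mathcal P)$ satisfies the dcmKP hierarchy with $N=1$ (with $x$ identified with $t_1$).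
   Context: Variables: $s$ (continuous), $t=(t_1,t_2,\dots)$, with $x$ identified with $t_1$. Poisson bracket $\{f,g\}=\frac{\partial f}{\partial k}\frac{\partial g}{\partial x}-\frac{\partial f}{\partial x}\frac{\partial g}{\partial k}$. The dcmKP hierarchy with $N=1$: $\mathcal L=k+\sum_{n\ge1}u_n(s,t)k^{1-n}$, $\mathcal P=p_0(s,t)k$ with $p_0\ne0$, $\log\mathcal P:=\log p_0+\log k$, satisfying for $n\ge1$: $\partial_{t_n}\mathcal L=\{\mathcal B_n,\mathcal L\}$ with $\mathcal B_n:=(\mathcal L^n)_{>0}$ (projection onto positive powers of $k$), $\partial_s\mathcal L=\{\log\mathcal P,\mathcal L\}$, $\partial_{t_n}\log\mathcal P=\partial_s\mathcal B_n-\{\log\mathcal P,\mathcal B_n\}$. *)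

theory Defs
  imports "HOL-Computational_Algebra.Formal_Power_Series"
          "HOL-Computational_Algebra.Formal_Laurent_Series"
begin

unbundle fps_syntax

text \<open>Coefficient ring: an abstract commutative real algebra (e.g. a ring of functions
  of s and t = (t_1, t_2, ...)), on which partial derivatives act as commuting derivations.\<close>

definition derivation :: "('a::{comm_ring_1,real_algebra_1} \<Rightarrow> 'a) \<Rightarrow> bool" where
  "derivation D \<longleftrightarrow> (\<forall>a b. D (a + b) = D a + D b) \<and> (\<forall>a b. D (a * b) = a * D b + D a * b)
      \<and> (\<forall>c a. D (c *\<^sub>R a) = c *\<^sub>R D a)"

definition ser_exp :: "'a::{comm_ring_1,real_algebra_1} fps \<Rightarrow> 'a fps" where
  "ser_exp G = Abs_fps (\<lambda>n. \<Sum>k\<le>n. (1 / fact k) *\<^sub>R (fps_nth (G ^ k) n))"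

definition ser_exp2 :: "'a::{comm_ring_1,real_algebra_1} fps fps \<Rightarrow> 'a fps fps" where
  "ser_exp2 G = Abs_fps (\<lambda>m. Abs_fps (\<lambda>n. \<Sum>k\<le>m+n. (1 / fact k) *\<^sub>R (fps_nth (fps_nth (G ^ k) m) n)))"

text \<open>Laurent series in k with finitely many positive powers of k are represented as
  'a fls in the variable X = k^{-1}: coefficient of k^m is  f $$ (-m).\<close>

definition cmap :: "('a::zero \<Rightarrow> 'a) \<Rightarrow> 'a fls \<Rightarrow> 'a fls" where
  "cmap D f = Abs_fls (\<lambda>n. if n < fls_subdegree f then 0 else D (f $$ n))"

text \<open>Derivative with respect to k.\<close>
definition dk :: "'a::comm_ring_1 fls \<Rightarrow> 'a fls" where
  "dk f = Abs_fls (\<lambda>j. of_int (1 - j) * f $$ (j - 1))"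

text \<open>Poisson bracket {f,g} = f_k g_x - f_x g_k, with x = t_1.\<close>
definition pbr :: "('a::comm_ring_1 \<Rightarrow> 'a) \<Rightarrow> 'a fls \<Rightarrow> 'a fls \<Rightarrow> 'a fls" where
  "pbr Dx f g = dk f * cmap Dx g - cmap Dx f * dk g"

text \<open>Bracket {log P, g} where log P = lp0 + log k (lp0 = log p0):
  d/dk log P = k^{-1}, d/dx log P = Dx lp0.\<close>
definition pbr_logP :: "('a::comm_ring_1 \<Rightarrow> 'a) \<Rightarrow> 'a \<Rightarrow> 'a fls \<Rightarrow> 'a fls" where
  "pbr_logP Dx lp0 g = fls_X * cmap Dx g - fls_const (Dx lp0) * dk g"

text \<open>Projection onto positive powers of k.\<close>
definition proj_pos :: "'a::zero fls \<Rightarrow> 'a fls" where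
  "proj_pos f = Abs_fls (\<lambda>j. if j < 0 then f $$ j else 0)"

text \<open>dcmKP hierarchy with N = 1, for L = k + sum u_n k^{1-n} and log P = lp0 + log k.\<close>
definition dcmKP1 :: "('a::{comm_ring_1,real_algebra_1} \<Rightarrow> 'a) \<Rightarrow> (nat \<Rightarrow> 'a \<Rightarrow> 'a)
     \<Rightarrow> 'a fls \<Rightarrow> 'a \<Rightarrow> bool" where
  "dcmKP1 Ds Dt L lp0 \<longleftrightarrow>
     L $$ (-1) = 1 \<and> (\<forall>j < -1. L $$ j = 0) \<and>
     (\<forall>n\<ge>1. cmap (Dt n) L = pbr (Dt 1) (proj_pos (L ^ n)) L) \<and>
     cmap Ds L = pbr_logP (Dt 1) lp0 L \<and>
     (\<forall>n\<ge>1. fls_const (Dt n lp0) =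
         cmap Ds (proj_pos (L ^ n)) - pbr_logP (Dt 1) lp0 (proj_pos (L ^ n)))"

text \<open>L (in X = k^{-1}) is the formal inverse series of k(z) = z * E(z^{-1}), E an fps
  with constant term 1: writing L = X^{-1} U with U$0 = 1, k(L(k)) = k, i.e.
  L * E(1/L) = X^{-1}, where 1/L = X * V with U * V = 1.\<close>
definition formal_inverse_of :: "'a::comm_ring_1 fps \<Rightarrow> 'a fls \<Rightarrow> bool" where
  "formal_inverse_of E L \<longleftrightarrow>
     L $$ (-1) = 1 \<and> (\<forall>j < -1. L $$ j = 0) \<and>
     (\<exists>V. fls_regpart (fls_shift (-1) L) * V = 1 \<and>
          L * fps_to_fls (fps_compose E (fps_X * V)) = fls_X_inv)"

definition kser :: "('a::{comm_ring_1,real_algebra_1} \<Rightarrow> 'a) \<Rightarrow> (nat \<Rightarrow> 'a \<Rightarrow> 'a) \<Rightarrow> 'a \<Rightarrow> 'a fps" where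
  "kser Ds Dt F = ser_exp (Abs_fps (\<lambda>n. if n = 0 then 0 else - ((1 / real n) *\<^sub>R Ds (Dt n F))))"

definition Gser :: "(nat \<Rightarrow> 'a \<Rightarrow> 'a) \<Rightarrow> 'a \<Rightarrow> 'a::{comm_ring_1,real_algebra_1} fps fps" where
  "Gser Dt F = Abs_fps (\<lambda>m. Abs_fps (\<lambda>n. if m = 0 \<or> n = 0 then 0
                      else (1 / (real m * real n)) *\<^sub>R Dt m (Dt n F)))"

text \<open>Two-variable Laurent series: outer variable z1^{-1}, inner variable z2^{-1}.\<close>
definition lift1 :: "'a::comm_ring_1 fps \<Rightarrow> 'a fls fls" where
  "lift1 E = fps_to_fls (Abs_fps (\<lambda>n. fls_const (fps_nth E n)))"

definition lift2 :: "'a::comm_ring_1 fps fps \<Rightarrow> 'a fls fls" where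
  "lift2 G = fps_to_fls (Abs_fps (\<lambda>m. fps_to_fls (fps_nth G m)))"

definition bilinear_identity :: "('a::{comm_ring_1,real_algebra_1} \<Rightarrow> 'a) \<Rightarrow> (nat \<Rightarrow> 'a \<Rightarrow> 'a) \<Rightarrow> 'a \<Rightarrow> bool" where
  "bilinear_identity Ds Dt F \<longleftrightarrow>
     fls_X_inv * lift1 (kser Ds Dt F) - fls_const (fls_X_inv * fps_to_fls (kser Ds Dt F))
       = (fls_X_inv - fls_const fls_X_inv) * lift2 (ser_exp2 (Gser Dt F))"

end

theory Submission
  imports Defs
begin

(* Write E(w) = exp(-\<Sum>_n F_{s t_n} w^n / n), so that k(z) = z E(1/z) and L is the inverse of k.
   With X = z_1^{-1}, the bilinear identity says X (z_1 E(z_1) - z_2 E(z_2)) = (1 - X z_2) exp G,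
   so its logarithmic derivative -X d/dX log has the coefficients z_2^m - h_m(1/z_2) at X^m,
   where h_m(w) = \<Sum>_n F_{t_m t_n} w^n / n.  Substituting z_2 := L(k) is a ring homomorphism on
   Laurent series in k^{-1}, and since L E(1/L) = k the substituted identity is a triangular
   recursion showing that L^m - h_m(1/L) is a polynomial in k with constant term F_{s t_m}.
   Hence L^m = (L^m)_{>0} + F_{s t_m} + h_m(1/L).  Differentiating this decomposition along s,
   x = t_1 and t_m, with the chain rule through L and the commutativity of the flows, gives the
   Lax equations. *)

section \<open>Composition of power series over a commutative ring\<close>

text \<open>The library proves the following facts for integral domains only, but the coefficients
  here (functions of \<open>s\<close> and \<open>t\<close>) have zero divisors.\<close>

text \<open>Since \<open>c ^ i\<close> starts in degree \<open>i\<close>, the coefficients of \<open>A oo c\<close> up to degree \<open>N\<close>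
  only involve the truncation of \<open>A\<close> at degree \<open>N\<close>.\<close>
definition compose_upto :: "nat \<Rightarrow> 'a::comm_ring_1 fps \<Rightarrow> 'a fps \<Rightarrow> 'a fps" where
  "compose_upto N A c = (\<Sum>i\<le>N. fps_const (A $ i) * c ^ i)"

lemma fps_compose_nth_eq_compose_upto:
  assumes c0: "c $ 0 = (0::'a::comm_ring_1)" and "n \<le> N"
  shows "(A oo c) $ n = compose_upto N A c $ n"
proof -
  have "(A oo c) $ n = (\<Sum>i\<in>{0..n}. A $ i * (c ^ i) $ n)" by (simp add: fps_compose_nth)
  also have "\<dots> = (\<Sum>i\<le>N. A $ i * (c ^ i) $ n)"
    by (rule sum.mono_neutral_left) (use assms startsby_zero_power_prefix[OF c0] in auto)
  finally show ?thesis by (simp add: compose_upto_def fps_sum_nth)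
qed

lemma fps_mult_nth_cong_right:
  assumes "\<And>i. i \<le> n \<Longrightarrow> a $ i = b $ i"
  shows "(x * a) $ n = (x * (b :: 'a::comm_ring_1 fps)) $ n"
  using assms by (simp add: fps_mult_nth)

lemma compose_upto_deriv_shift:
  fixes A :: "'a::comm_ring_1 fps"
  shows "(\<Sum>i\<le>Suc M. fps_const (A $ i) * (of_nat i * c ^ (i - 1) * d)) = compose_upto M (fps_deriv A) c * d"
proof -
  have "(\<Sum>i\<le>Suc M. fps_const (A $ i) * (of_nat i * c ^ (i - 1) * d))
      = (\<Sum>j\<le>M. fps_const (A $ Suc j) * (of_nat (Suc j) * c ^ j * d))"
    by (subst sum.atMost_Suc_shift) simp
  also have "\<dots> = (\<Sum>j\<le>M. fps_const (fps_deriv A $ j) * c ^ j) * d"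
  proof (simp only: sum_distrib_right, rule sum.cong[OF refl])
    fix j
    have "fps_const (fps_deriv A $ j) = fps_const (of_nat (Suc j)) * fps_const (A $ Suc j)"
      by (simp del: of_nat_Suc)
    then show "fps_const (A $ Suc j) * (of_nat (Suc j) * c ^ j * d) = fps_const (fps_deriv A $ j) * c ^ j * d"
      unfolding fps_of_nat by (simp only: ac_simps)
  qed
  finally show ?thesis by (simp add: compose_upto_def)
qed

lemma compose_upto_mult_nth:
  assumes c0: "c $ 0 = (0::'a::comm_ring_1)"
  shows "(compose_upto n A c * d) $ n = ((A oo c) * d) $ n"
  by (subst mult.commute, subst (2) mult.commute, rule fps_mult_nth_cong_right)
     (simp add: fps_compose_nth_eq_compose_upto[OF c0])

lemma fps_compose_mult_distrib_cring:
  assumes c0: "c $ 0 = (0::'a::comm_ring_1)"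
  shows "(a * b) oo c = (a oo c) * (b oo c)"
proof (rule fps_ext)
  fix n
  define T where "T = (\<lambda>i j. a $ i * b $ j * (c ^ (i + j)) $ n)"
  have "((a oo c) * (b oo c)) $ n = (compose_upto n a c * (b oo c)) $ n"
    by (simp only: compose_upto_mult_nth[OF c0])
  also have "\<dots> = (compose_upto n b c * compose_upto n a c) $ n"
    by (simp only: mult.commute[of "compose_upto n a c"] compose_upto_mult_nth[OF c0])
  also have "compose_upto n b c * compose_upto n a c = compose_upto n a c * compose_upto n b c"
    by (rule mult.commute)
  also have "\<dots> = (\<Sum>i\<le>n. \<Sum>j\<le>n. fps_const (a $ i * b $ j) * c ^ (i + j))"
    unfolding compose_upto_def sum_product by (simp only: power_add mult_ac fps_const_mult[symmetric])
  also have "(\<Sum>i\<le>n. \<Sum>j\<le>n. fps_const (a $ i * b $ j) * c ^ (i + j)) $ n = (\<Sum>i\<le>n. \<Sum>j\<le>n. T i j)"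
    by (simp add: T_def fps_sum_nth)
  also have "\<dots> = (\<Sum>(i, j) \<in> {(i, j). i + j \<le> n}. T i j)"
  proof -
    have T0: "T i j = 0" if "\<not> i + j \<le> n" for i j
      using startsby_zero_power_prefix[OF c0] that by (simp add: T_def)
    show ?thesis
      unfolding sum.cartesian_product
    proof (rule sum.mono_neutral_right)
      show "\<forall>x \<in> {..n} \<times> {..n} - {(i, j). i + j \<le> n}. (case x of (i, j) \<Rightarrow> T i j) = 0"
      proof
        fix x
        assume "x \<in> {..n} \<times> {..n} - {(i, j). i + j \<le> n}"
        then obtain i j where "x = (i, j)" and "\<not> i + j \<le> n" by auto
        then show "(case x of (i, j) \<Rightarrow> T i j) = 0" by (simp add: T0)
      qed
    qed auto
  qed
  also have "\<dots> = (\<Sum>s = 0..n. \<Sum>i = 0..s. a $ i * b $ (s - i) * (c ^ s) $ n)"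
    unfolding T_def by (rule sum_pair_less_iff)
  also have "\<dots> = ((a * b) oo c) $ n"
    by (simp add: fps_compose_nth fps_mult_nth sum_distrib_right)
  finally show "((a * b) oo c) $ n = ((a oo c) * (b oo c)) $ n" ..
qed

lemma fps_compose_power_cring:
  assumes "c $ 0 = (0::'a::comm_ring_1)"
  shows "(a ^ n) oo c = (a oo c) ^ n"
  by (induct n) (simp_all add: fps_compose_mult_distrib_cring[OF assms])

lemma fps_compose_X_power_cring:
  assumes "c $ 0 = (0::'a::comm_ring_1)"
  shows "(fps_X ^ n) oo c = c ^ n"
  using fps_compose_power_cring[OF assms, of fps_X n] assms by simp

lemma fps_compose_deriv_cring:
  assumes c0: "c $ 0 = (0::'a::comm_ring_1)"
  shows "fps_deriv (A oo c) = (fps_deriv A oo c) * fps_deriv c"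
proof (rule fps_ext)
  fix n
  have "fps_deriv (A oo c) $ n = fps_deriv (compose_upto (Suc n) A c) $ n"
    using fps_compose_nth_eq_compose_upto[OF c0, of "Suc n" "Suc n"] by simp
  also have "fps_deriv (compose_upto (Suc n) A c)
      = (\<Sum>i\<le>Suc n. fps_const (A $ i) * (of_nat i * c ^ (i - 1) * fps_deriv c))"
    unfolding compose_upto_def fps_deriv_sum
    by (rule sum.cong[OF refl]) (simp add: fps_deriv_power' mult_ac)
  also have "\<dots> = compose_upto n (fps_deriv A) c * fps_deriv c"
    by (rule compose_upto_deriv_shift)
  finally show "fps_deriv (A oo c) $ n = ((fps_deriv A oo c) * fps_deriv c) $ n"
    by (simp only: compose_upto_mult_nth[OF c0])
qed

context
  fixes D :: "'a::{comm_ring_1,real_algebra_1} \<Rightarrow> 'a"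
  assumes der: "derivation D"
begin

lemma derivation_add: "D (a + b) = D a + D b"
  using der by (simp add: derivation_def)

lemma derivation_mult: "D (a * b) = a * D b + D a * b"
  using der by (simp add: derivation_def)

lemma derivation_scaleR: "D (c *\<^sub>R a) = c *\<^sub>R D a"
  using der by (simp add: derivation_def)

lemma derivation_0 [simp]: "D 0 = 0"
  using derivation_add[of 0 0] by simp

lemma derivation_1 [simp]: "D 1 = 0"
  using derivation_mult[of 1 1] by simp

lemma derivation_uminus: "D (- a) = - D a"
  using derivation_add[of a "- a"] by (simp add: eq_neg_iff_add_eq_0 add.commute)

lemma derivation_diff: "D (a - b) = D a - D b"
  using derivation_add[of a "- b"] by (simp add: derivation_uminus)

lemma derivation_sum: "D (sum f S) = (\<Sum>i\<in>S. D (f i))"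
  by (induct S rule: infinite_finite_induct) (simp_all add: derivation_add)

lemma derivation_of_real [simp]: "D (of_real r) = 0"
  using derivation_scaleR[of r 1] by (simp add: scaleR_conv_of_real)

end

definition fps_cmap :: "('a \<Rightarrow> 'a) \<Rightarrow> 'a fps \<Rightarrow> 'a fps" where
  "fps_cmap D A = Abs_fps (\<lambda>n. D (A $ n))"

lemma fps_cmap_nth [simp]: "fps_cmap D A $ n = D (A $ n)"
  by (simp add: fps_cmap_def)

lemma fps_cmap_commute:
  assumes "\<And>a. D1 (D2 a) = D2 (D1 a)"
  shows "fps_cmap D1 (fps_cmap D2 A) = fps_cmap D2 (fps_cmap D1 A)"
  using assms by (simp add: fps_eq_iff)

context
  fixes D :: "'a::{comm_ring_1,real_algebra_1} \<Rightarrow> 'a"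
  assumes der: "derivation D"
begin

lemma fps_cmap_add: "fps_cmap D (A + B) = fps_cmap D A + fps_cmap D B"
  by (simp add: fps_eq_iff derivation_add[OF der])

lemma fps_cmap_uminus: "fps_cmap D (- A) = - fps_cmap D A"
  by (simp add: fps_eq_iff derivation_uminus[OF der])

lemma fps_cmap_sum: "fps_cmap D (sum f S) = (\<Sum>i\<in>S. fps_cmap D (f i))"
  by (induct S rule: infinite_finite_induct) (simp_all add: fps_cmap_add fps_eq_iff der)

lemma fps_cmap_mult: "fps_cmap D (A * B) = A * fps_cmap D B + fps_cmap D A * B"
  by (simp add: fps_eq_iff fps_mult_nth derivation_sum[OF der] derivation_mult[OF der] sum.distrib)

lemma fps_cmap_const [simp]: "fps_cmap D (fps_const a) = fps_const (D a)"
  by (simp add: fps_eq_iff der)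

lemma fps_cmap_power: "fps_cmap D (A ^ n) = of_nat n * A ^ (n - 1) * fps_cmap D A"
proof (induct n)
  case (Suc n)
  then show ?case by (cases n) (simp_all add: fps_cmap_mult algebra_simps)
qed (simp add: fps_eq_iff der)

lemma fps_cmap_compose:
  assumes c0: "c $ 0 = 0"
  shows "fps_cmap D (A oo c) = (fps_cmap D A oo c) + (fps_deriv A oo c) * fps_cmap D c"
proof (rule fps_ext)
  fix n
  have "fps_cmap D (A oo c) $ n = fps_cmap D (compose_upto (Suc n) A c) $ n"
    using fps_compose_nth_eq_compose_upto[OF c0, of n "Suc n"] by simp
  also have "fps_cmap D (compose_upto (Suc n) A c) = compose_upto (Suc n) (fps_cmap D A) c +
      (\<Sum>i\<le>Suc n. fps_const (A $ i) * (of_nat i * c ^ (i - 1) * fps_cmap D c))"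
    unfolding compose_upto_def fps_cmap_sum sum.distrib[symmetric]
    by (rule sum.cong[OF refl]) (simp add: fps_cmap_mult fps_cmap_power mult_ac)
  also have "\<dots> = compose_upto (Suc n) (fps_cmap D A) c + compose_upto n (fps_deriv A) c * fps_cmap D c"
    by (simp only: compose_upto_deriv_shift)
  finally show "fps_cmap D (A oo c) $ n = ((fps_cmap D A oo c) + (fps_deriv A oo c) * fps_cmap D c) $ n"
    by (simp only: fps_add_nth compose_upto_mult_nth[OF c0]
        fps_compose_nth_eq_compose_upto[OF c0, of n "Suc n"] le_SucI order_refl)
qed

end

context
  fixes D :: "'a::{comm_ring_1,real_algebra_1} \<Rightarrow> 'a"
  assumes der: "derivation D"
begin

lemma cmap_nth [simp]: "cmap D f $$ n = D (f $$ n)"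
proof -
  have "Abs_fls (\<lambda>n. if n < fls_subdegree f then 0 else D (f $$ n)) $$ n
      = (if n < fls_subdegree f then 0 else D (f $$ n))"
    by (rule nth_Abs_fls_lower_bound[of "fls_subdegree f"]) simp
  then show ?thesis using der by (simp add: cmap_def)
qed

lemma cmap_fps_to_fls: "cmap D (fps_to_fls A) = fps_to_fls (fps_cmap D A)"
  by (simp add: fls_eq_iff der)

lemma cmap_shift: "cmap D (fls_shift k f) = fls_shift k (cmap D f)"
  by (simp add: fls_eq_iff)

lemma cmap_diff: "cmap D (f - g) = cmap D f - cmap D g"
  by (simp add: fls_eq_iff derivation_diff[OF der])

lemma cmap_const [simp]: "cmap D (fls_const a) = fls_const (D a)"
  by (simp add: fls_eq_iff der)

lemma cmap_one [simp]: "cmap D 1 = 0"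
  by (simp add: fls_eq_iff der)

lemma cmap_X_inv [simp]: "cmap D fls_X_inv = 0"
  by (simp add: fls_eq_iff der)

lemma cmap_mult: "cmap D (f * g) = f * cmap D g + cmap D f * g"
proof -
  define F G where "F = fls_base_factor_to_fps f" and "G = fls_base_factor_to_fps g"
  define a b where "a = - fls_subdegree f" and "b = - fls_subdegree g"
  have f: "f = fls_shift a (fps_to_fls F)" and g: "g = fls_shift b (fps_to_fls G)"
    unfolding a_def b_def F_def G_def by (rule fls_conv_base_factor_to_fps_shift_subdegree)+
  have "cmap D (f * g) = fls_shift (a + b) (fps_to_fls (fps_cmap D (F * G)))"
    by (simp add: f g fls_times_both_shifted_simp cmap_shift cmap_fps_to_fls flip: fls_times_fps_to_fls)
  also have "\<dots> = f * cmap D g + cmap D f * g"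
    by (simp add: f g fps_cmap_mult[OF der] fls_times_both_shifted_simp cmap_shift fls_times_fps_to_fls
        cmap_fps_to_fls add.commute)
  finally show ?thesis .
qed

lemma cmap_power: "cmap D (f ^ n) = of_nat n * f ^ (n - 1) * cmap D f"
proof (induct n)
  case (Suc n)
  then show ?case by (cases n) (simp_all add: cmap_mult algebra_simps)
qed simp

end

lemma dk_eq: "dk f = - (fls_X ^ 2 * fls_deriv (f :: 'a::comm_ring_1 fls))"
proof -
  obtain N where N: "\<forall>n<N. f $$ n = 0" by (elim fls_nth_vanishes_belowE)
  have "dk f $$ n = of_int (1 - n) * f $$ (n - 1)" for n
    unfolding dk_def by (rule nth_Abs_fls_lower_bound[of "N + 1"]) (use N in auto)
  then show ?thesis
    by (simp add: fls_eq_iff fls_X_power_times_conv_shift algebra_simps)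
qed

definition exp_series :: "'a::{comm_ring_1,real_algebra_1} fps" where
  "exp_series = Abs_fps (\<lambda>k. of_real (1 / fact k))"

lemma fps_deriv_exp_series: "fps_deriv exp_series = exp_series"
proof (rule fps_ext)
  fix k
  have "real (Suc k) * (1 / fact (Suc k)) = 1 / fact k"
    by (simp add: fact_Suc)
  then have "of_nat (Suc k) * of_real (1 / fact (Suc k)) = (of_real (1 / fact k) :: 'a)"
    by (metis of_real_mult of_real_of_nat_eq)
  then show "fps_deriv exp_series $ k = (exp_series :: 'a fps) $ k"
    by (simp add: exp_series_def del: of_nat_Suc)
qed

lemma ser_exp_eq_compose: "ser_exp A = exp_series oo A"
  by (simp add: ser_exp_def exp_series_def fps_compose_def scaleR_conv_of_real atLeast0AtMost)

lemma fps_deriv_compose_exp_like: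
  assumes "fps_deriv C = C" and "A $ 0 = (0::'a::comm_ring_1)"
  shows "fps_deriv (C oo A) = fps_deriv A * (C oo A)"
  by (simp add: fps_compose_deriv_cring assms mult.commute)

lemma fps_cmap_compose_exp_series:
  assumes "derivation D" and "A $ 0 = 0"
  shows "fps_cmap D (exp_series oo A) = fps_cmap D A * (exp_series oo A)"
proof -
  have "fps_cmap D exp_series = 0"
    using assms(1) by (simp add: fps_eq_iff exp_series_def)
  then show ?thesis
    by (simp add: fps_cmap_compose assms fps_deriv_exp_series mult.commute)
qed

section \<open>Substituting a Laurent series for \<open>k\<close>\<close>

lemma fls_X_times_X_inv: "fls_X * fls_X_inv = (1::'a::comm_ring_1 fls)"
  by (simp add: fls_X_conv_shift_1 fls_X_inv_conv_shift_1 fls_times_both_shifted_simp)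

lemma fls_X_power_times_X_inv_power: "fls_X ^ n * fls_X_inv ^ n = (1::'a::comm_ring_1 fls)"
  by (simp add: fls_X_times_X_inv flip: power_mult_distrib)

lemma fls_eq_X_inv_power_times_regpart:
  fixes f :: "'a::comm_ring_1 fls"
  assumes "- fls_subdegree f \<le> int N"
  shows "f = fls_X_inv ^ N * fps_to_fls (fls_regpart (fls_shift (- int N) f))"
proof (cases "f = 0")
  case False
  then have "fps_to_fls (fls_regpart (fls_shift (- int N) f)) = fls_shift (- int N) f"
    using assms by simp
  then show ?thesis by (simp add: fls_X_inv_power_times_conv_shift)
qed simp

lemma fls_X_inv_power_times_pad:
  fixes B :: "'a::comm_ring_1 fps"
  shows "fls_X_inv ^ N * fps_to_fls B = fls_X_inv ^ (N + k) * fps_to_fls (fps_X ^ k * B)"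
proof -
  have "fls_X_inv ^ (N + k) * fps_to_fls (fps_X ^ k * B)
      = fls_X_inv ^ N * (fls_X ^ k * fls_X_inv ^ k) * fps_to_fls B"
    by (simp add: fls_times_fps_to_fls fps_to_fls_power power_add mult_ac)
  then show ?thesis by (simp add: fls_X_power_times_X_inv_power)
qed

lemma fls_X_inv_power_times_cancel:
  fixes B C :: "'a::comm_ring_1 fps"
  assumes "fls_X_inv ^ N * fps_to_fls B = fls_X_inv ^ N * fps_to_fls C"
  shows "B = C"
proof -
  have "fls_X ^ N * (fls_X_inv ^ N * fps_to_fls B) = fls_X ^ N * (fls_X_inv ^ N * fps_to_fls C)"
    using assms by simp
  then show ?thesis by (simp add: fls_X_power_times_X_inv_power flip: mult.assoc)
qed

lemma fls_X_inv_power_times_fps_cases: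
  obtains N B C where "(f::'a::comm_ring_1 fls) = fls_X_inv ^ N * fps_to_fls B"
    and "(g::'a fls) = fls_X_inv ^ N * fps_to_fls C"
proof -
  define M K where "M = nat (- fls_subdegree f)" and "K = nat (- fls_subdegree g)"
  have "f = fls_X_inv ^ M * fps_to_fls (fls_regpart (fls_shift (- int M) f))"
    by (rule fls_eq_X_inv_power_times_regpart) (simp add: M_def)
  also have "\<dots> = fls_X_inv ^ (M + K) * fps_to_fls (fps_X ^ K * fls_regpart (fls_shift (- int M) f))"
    by (rule fls_X_inv_power_times_pad)
  finally have f: "f = \<dots>" .
  have "g = fls_X_inv ^ K * fps_to_fls (fls_regpart (fls_shift (- int K) g))"
    by (rule fls_eq_X_inv_power_times_regpart) (simp add: K_def)
  also have "\<dots> = fls_X_inv ^ (M + K) * fps_to_fls (fps_X ^ M * fls_regpart (fls_shift (- int K) g))"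
    by (subst add.commute) (rule fls_X_inv_power_times_pad)
  finally show ?thesis by (rule that[OF f])
qed

text \<open>Laurent series in \<open>X = k\<^sup>-\<^sup>1\<close> are evaluated at \<open>k := L\<close> for a Laurent series \<open>L\<close> whose
  inverse \<open>W\<close> is a power series without constant term: \<open>X\<^sup>-\<^sup>N B(X)\<close> goes to \<open>L\<^sup>N B(W)\<close>.\<close>
locale laurent_substitution =
  fixes W :: "'a::comm_ring_1 fps" and L :: "'a fls"
  assumes W_0: "W $ 0 = 0" and L_times_W: "L * fps_to_fls W = 1"
begin

definition at_L :: "'a fls \<Rightarrow> 'a fls" where
  "at_L f = L ^ nat (- fls_subdegree f) *
     fps_to_fls (fls_regpart (fls_shift (- int (nat (- fls_subdegree f))) f) oo W)"

lemma L_power_times_compose_pad: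
  assumes "K \<le> M"
  shows "L ^ M * fps_to_fls ((fps_X ^ (M - K) * B) oo W) = L ^ K * fps_to_fls (B oo W)"
proof -
  have "fps_to_fls ((fps_X ^ (M - K) * B) oo W) = fps_to_fls W ^ (M - K) * fps_to_fls (B oo W)"
    by (simp add: fps_compose_mult_distrib_cring[OF W_0] fps_compose_X_power_cring[OF W_0]
        fls_times_fps_to_fls fps_to_fls_power)
  moreover have "L ^ M = L ^ K * L ^ (M - K)"
    using assms by (simp flip: power_add)
  ultimately have "L ^ M * fps_to_fls ((fps_X ^ (M - K) * B) oo W)
      = L ^ K * ((L * fps_to_fls W) ^ (M - K) * fps_to_fls (B oo W))"
    by (simp only: power_mult_distrib mult.assoc)
  then show ?thesis by (simp add: L_times_W)
qed

lemma at_L_X_inv_power_times: "at_L (fls_X_inv ^ N * fps_to_fls B) = L ^ N * fps_to_fls (B oo W)"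
proof -
  define f where "f = fls_X_inv ^ N * fps_to_fls B"
  define N0 where "N0 = nat (- fls_subdegree f)"
  define B0 where "B0 = fls_regpart (fls_shift (- int N0) f)"
  have f0: "f = fls_X_inv ^ N0 * fps_to_fls B0"
    unfolding B0_def N0_def by (rule fls_eq_X_inv_power_times_regpart) simp
  define M where "M = max N N0"
  have "fls_X_inv ^ M * fps_to_fls (fps_X ^ (M - N) * B) = fls_X_inv ^ M * fps_to_fls (fps_X ^ (M - N0) * B0)"
    using fls_X_inv_power_times_pad[of N B "M - N"] fls_X_inv_power_times_pad[of N0 B0 "M - N0"] f0 f_def
    by (simp add: M_def)
  then have B: "fps_X ^ (M - N) * B = fps_X ^ (M - N0) * B0"
    by (rule fls_X_inv_power_times_cancel)
  have "L ^ N * fps_to_fls (B oo W) = L ^ M * fps_to_fls ((fps_X ^ (M - N) * B) oo W)"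
    by (rule L_power_times_compose_pad[symmetric]) (simp add: M_def)
  also have "\<dots> = L ^ N0 * fps_to_fls (B0 oo W)"
    unfolding B by (rule L_power_times_compose_pad) (simp add: M_def)
  finally show ?thesis
    by (simp add: at_L_def N0_def B0_def f_def)
qed

lemma at_L_add: "at_L (f + g) = at_L f + at_L g"
proof -
  obtain N B C where fg: "f = fls_X_inv ^ N * fps_to_fls B" "g = fls_X_inv ^ N * fps_to_fls C"
    by (rule fls_X_inv_power_times_fps_cases)
  have "f + g = fls_X_inv ^ N * fps_to_fls (B + C)"
    by (simp add: fg algebra_simps)
  then have "at_L (f + g) = L ^ N * fps_to_fls ((B + C) oo W)"
    by (simp only: at_L_X_inv_power_times)
  then show ?thesis
    by (simp only: fg at_L_X_inv_power_times fps_compose_add_distrib fps_to_fls_plus distrib_left)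
qed

lemma at_L_mult: "at_L (f * g) = at_L f * at_L g"
proof -
  obtain N B C where fg: "f = fls_X_inv ^ N * fps_to_fls B" "g = fls_X_inv ^ N * fps_to_fls C"
    by (rule fls_X_inv_power_times_fps_cases)
  have "f * g = fls_X_inv ^ (N + N) * fps_to_fls (B * C)"
    by (simp add: fg fls_times_fps_to_fls power_add mult_ac)
  then have "at_L (f * g) = L ^ (N + N) * fps_to_fls ((B * C) oo W)"
    by (simp only: at_L_X_inv_power_times)
  moreover have "at_L f = L ^ N * fps_to_fls (B oo W)" "at_L g = L ^ N * fps_to_fls (C oo W)"
    unfolding fg by (rule at_L_X_inv_power_times)+
  ultimately show ?thesis
    by (simp only: fps_compose_mult_distrib_cring[OF W_0] fls_times_fps_to_fls power_add mult_ac)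
qed

lemma at_L_uminus: "at_L (- f) = - at_L f"
proof -
  obtain N B where f: "f = fls_X_inv ^ N * fps_to_fls B"
    using fls_X_inv_power_times_fps_cases by metis
  have "- f = fls_X_inv ^ N * fps_to_fls (- B)"
    by (simp add: f)
  then have "at_L (- f) = L ^ N * fps_to_fls ((- B) oo W)"
    by (simp only: at_L_X_inv_power_times)
  then show ?thesis
    by (simp only: f at_L_X_inv_power_times fps_compose_uminus fps_to_fls_uminus mult_minus_right)
qed

lemma at_L_diff: "at_L (f - g) = at_L f - at_L g"
  using at_L_add[of f "- g"] at_L_uminus[of g] by simp

lemma at_L_fps: "at_L (fps_to_fls B) = fps_to_fls (B oo W)"
  using at_L_X_inv_power_times[of 0 B] by simp

lemma at_L_const [simp]: "at_L (fls_const a) = fls_const a"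
  using at_L_fps[of "fps_const a"] by simp

lemma at_L_zero [simp]: "at_L 0 = 0"
  using at_L_const[of 0] by simp

lemma at_L_one [simp]: "at_L 1 = 1"
  using at_L_const[of 1] by simp

lemma at_L_X_inv [simp]: "at_L fls_X_inv = L"
  using at_L_X_inv_power_times[of 1 1] by simp

lemma at_L_of_nat [simp]: "at_L (of_nat n) = of_nat n"
  by (simp add: fls_of_nat)

lemma at_L_power: "at_L (f ^ n) = at_L f ^ n"
  by (induct n) (simp_all add: at_L_mult)

lemma at_L_sum: "at_L (sum f S) = (\<Sum>i\<in>S. at_L (f i))"
  by (induct S rule: infinite_finite_induct) (simp_all add: at_L_add)

end

definition k_polynomial :: "'a::comm_ring_1 fls \<Rightarrow> bool" where
  "k_polynomial f \<longleftrightarrow> (\<forall>j>0. f $$ j = 0)"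

lemma k_polynomial_mult:
  assumes f: "k_polynomial f" and g: "k_polynomial g"
  shows "k_polynomial (f * g)"
  unfolding k_polynomial_def
proof (intro allI impI)
  fix j :: int
  assume "j > 0"
  then have "f $$ i * g $$ (j - i) = 0" for i
    using f g by (cases "i > 0") (simp_all add: k_polynomial_def)
  then show "(f * g) $$ j = 0"
    by (simp add: fls_times_nth(2))
qed

lemma k_polynomial_diff: "k_polynomial f \<Longrightarrow> k_polynomial g \<Longrightarrow> k_polynomial (f - g)"
  by (simp add: k_polynomial_def)

lemma k_polynomial_uminus: "k_polynomial f \<Longrightarrow> k_polynomial (- f)"
  by (simp add: k_polynomial_def)

lemma k_polynomial_zero [simp]: "k_polynomial 0"
  by (simp add: k_polynomial_def)

lemma k_polynomial_const [simp]: "k_polynomial (fls_const a)"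
  by (simp add: k_polynomial_def)

lemma k_polynomial_of_nat [simp]: "k_polynomial (of_nat n)"
  by (simp add: k_polynomial_def fls_of_nat)

lemma k_polynomial_X_inv [simp]: "k_polynomial fls_X_inv"
  by (simp add: k_polynomial_def)

lemma k_polynomial_sum: "(\<And>i. i \<in> S \<Longrightarrow> k_polynomial (f i)) \<Longrightarrow> k_polynomial (sum f S)"
  by (induct S rule: infinite_finite_induct) (simp_all add: k_polynomial_def)

lemma k_polynomial_subdegree:
  assumes "k_polynomial f"
  shows "fls_subdegree f \<le> 0"
proof (cases "f = 0")
  case False
  then show ?thesis
    using assms nth_fls_subdegree_nonzero[OF False] unfolding k_polynomial_def by (meson not_le)
qed simp

lemma k_polynomial_mult_nth_0:
  assumes f: "k_polynomial f" and g: "k_polynomial g"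
  shows "(f * g) $$ 0 = f $$ 0 * g $$ 0"
proof -
  have "(f * g) $$ 0 = (\<Sum>i = fls_subdegree f..0 - fls_subdegree g. f $$ i * g $$ (0 - i))"
    by (rule fls_times_nth(2))
  also have "\<dots> = (\<Sum>i\<in>{0}. f $$ i * g $$ (0 - i))"
  proof (rule sum.mono_neutral_right)
    show "\<forall>i\<in>{fls_subdegree f..0 - fls_subdegree g} - {0}. f $$ i * g $$ (0 - i) = 0"
    proof
      fix i
      assume "i \<in> {fls_subdegree f..0 - fls_subdegree g} - {0}"
      then have "i > 0 \<or> 0 - i > 0" by auto
      then show "f $$ i * g $$ (0 - i) = 0"
        using f g unfolding k_polynomial_def by auto
    qed
    show "{0} \<subseteq> {fls_subdegree f..0 - fls_subdegree g}"
      using k_polynomial_subdegree[OF f] k_polynomial_subdegree[OF g] by simp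
  qed simp
  finally show ?thesis by simp
qed

lemma proj_pos_nth [simp]: "proj_pos f $$ j = (if j < 0 then f $$ j else 0)"
proof -
  obtain N where "\<forall>n<N. f $$ n = 0" by (elim fls_nth_vanishes_belowE)
  then show ?thesis
    unfolding proj_pos_def by (intro nth_Abs_fls_lower_bound[of N]) auto
qed

text \<open>As in \<open>lift1\<close> and \<open>lift2\<close>: the outer variable is \<open>z\<^sub>1\<^sup>-\<^sup>1\<close>, the coefficients are
  Laurent series in \<open>z\<^sub>2\<^sup>-\<^sup>1\<close>.\<close>
definition fps_to_fls_coeffs :: "'a::comm_ring_1 fps fps \<Rightarrow> 'a fls fps" where
  "fps_to_fls_coeffs G = Abs_fps (\<lambda>m. fps_to_fls (G $ m))"

definition fls_const_coeffs :: "'a::comm_ring_1 fps \<Rightarrow> 'a fls fps" where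
  "fls_const_coeffs E = Abs_fps (\<lambda>n. fls_const (E $ n))"

lemma fps_to_fls_coeffs_nth [simp]: "fps_to_fls_coeffs G $ m = fps_to_fls (G $ m)"
  by (simp add: fps_to_fls_coeffs_def)

lemma fls_const_coeffs_nth [simp]: "fls_const_coeffs E $ m = fls_const (E $ m)"
  by (simp add: fls_const_coeffs_def)

lemma fps_to_fls_sum: "fps_to_fls (sum f S) = (\<Sum>i\<in>S. fps_to_fls (f i))"
  by (induct S rule: infinite_finite_induct) simp_all

lemma fps_to_fls_coeffs_power: "fps_to_fls_coeffs (G ^ k) = fps_to_fls_coeffs G ^ k"
proof (induct k)
  case (Suc k)
  then show ?case
    by (simp add: fps_eq_iff fps_mult_nth fps_to_fls_sum fls_times_fps_to_fls)
qed (simp add: fps_eq_iff)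

lemma fps_deriv_fls_const_coeffs: "fps_deriv (fls_const_coeffs E) = fls_const_coeffs (fps_deriv E)"
  by (simp add: fps_eq_iff fls_of_nat flip: fls_const_mult_const)

lemma fps_X_times_deriv_nth: "(fps_X * fps_deriv A) $ n = (if n = 0 then 0 else of_nat n * A $ n)"
  by (cases n) simp_all

lemma fps_to_fls_coeffs_ser_exp2:
  fixes G :: "'a::{comm_ring_1,real_algebra_1} fps fps"
  assumes G0: "G $ 0 = 0"
  shows "fps_to_fls_coeffs (ser_exp2 G) = fls_const_coeffs exp_series oo fps_to_fls_coeffs G"
proof (rule fps_ext)
  fix m
  have "ser_exp2 G $ m = (\<Sum>k\<le>m. fps_const (exp_series $ k) * (G ^ k) $ m)"
  proof (rule fps_ext)
    fix n
    have "ser_exp2 G $ m $ n = (\<Sum>k\<le>m+n. exp_series $ k * (G ^ k $ m $ n))"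
      by (simp add: ser_exp2_def exp_series_def scaleR_conv_of_real)
    also have "\<dots> = (\<Sum>k\<le>m. exp_series $ k * (G ^ k $ m $ n))"
      by (rule sum.mono_neutral_right) (use startsby_zero_power_prefix[OF G0] in auto)
    finally show "ser_exp2 G $ m $ n = (\<Sum>k\<le>m. fps_const (exp_series $ k) * (G ^ k) $ m) $ n"
      by (simp add: fps_sum_nth)
  qed
  then show "fps_to_fls_coeffs (ser_exp2 G) $ m = (fls_const_coeffs exp_series oo fps_to_fls_coeffs G) $ m"
    by (simp add: fps_compose_nth atLeast0AtMost fps_to_fls_sum fls_times_fps_to_fls
        flip: fps_to_fls_coeffs_power)
qed

section \<open>The generating series of the \<open>\<tau>\<close>-function\<close>

locale dispersionless_tau =
  fixes Ds :: "'a::{comm_ring_1,real_algebra_1} \<Rightarrow> 'a"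
    and Dt :: "nat \<Rightarrow> 'a \<Rightarrow> 'a"
    and F :: 'a
    and L :: "'a fls"
  assumes derivation_s: "derivation Ds"
    and derivation_t: "\<And>n. n \<ge> 1 \<Longrightarrow> derivation (Dt n)"
    and s_t_commute: "\<And>n a. n \<ge> 1 \<Longrightarrow> Ds (Dt n a) = Dt n (Ds a)"
    and t_t_commute: "\<And>m n a. m \<ge> 1 \<Longrightarrow> n \<ge> 1 \<Longrightarrow> Dt m (Dt n a) = Dt n (Dt m a)"
    and bilinear: "bilinear_identity Ds Dt F"
    and L_inverse: "formal_inverse_of (kser Ds Dt F) L"
begin

abbreviation E :: "'a fps" where "E \<equiv> kser Ds Dt F"

abbreviation Dx :: "'a \<Rightarrow> 'a" where "Dx \<equiv> Dt 1"

lemma derivation_x: "derivation Dx"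
  by (rule derivation_t) simp

lemma L_nth_minus_1: "L $$ (-1) = 1" and L_nth_below: "j < -1 \<Longrightarrow> L $$ j = 0"
  using L_inverse by (simp_all add: formal_inverse_of_def)

definition U :: "'a fps" where
  "U = fls_regpart (fls_shift (-1) L)"

lemma L_eq: "L = fls_X_inv * fps_to_fls U"
proof (rule fls_eqI)
  fix n
  show "L $$ n = (fls_X_inv * fps_to_fls U) $$ n"
  proof (cases "n < -1")
    case True
    then show ?thesis by (simp add: fls_X_inv_times_conv_shift L_nth_below)
  next
    case False
    then have "int (nat (n + 1)) - 1 = n" by simp
    then show ?thesis using False by (simp add: fls_X_inv_times_conv_shift U_def)
  qed
qed

definition V :: "'a fps" where
  "V = (SOME V. U * V = 1 \<and> L * fps_to_fls (E oo (fps_X * V)) = fls_X_inv)"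

text \<open>\<open>W = 1/L\<close> as a power series in \<open>X = k\<^sup>-\<^sup>1\<close>.\<close>
definition W :: "'a fps" where
  "W = fps_X * V"

definition at_W :: "'a fps \<Rightarrow> 'a fls" where
  "at_W B = fps_to_fls (B oo W)"

lemma U_times_V: "U * V = 1" and L_times_E_at_W: "L * at_W E = fls_X_inv"
proof -
  have "\<exists>V. U * V = 1 \<and> L * fps_to_fls (E oo (fps_X * V)) = fls_X_inv"
    using L_inverse by (simp add: formal_inverse_of_def U_def)
  then have "U * V = 1 \<and> L * fps_to_fls (E oo (fps_X * V)) = fls_X_inv"
    unfolding V_def by (rule someI_ex)
  then show "U * V = 1" "L * at_W E = fls_X_inv"
    by (simp_all add: W_def at_W_def)
qed

lemma W_0: "W $ 0 = 0"
  by (simp add: W_def)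

lemma L_times_W: "L * fps_to_fls W = 1"
proof -
  have "L * fps_to_fls W = fls_X_inv * fps_to_fls U * fps_to_fls W"
    using arg_cong[where f = "\<lambda>x. x * fps_to_fls W", OF L_eq] .
  also have "\<dots> = (fls_X * fls_X_inv) * fps_to_fls (U * V)"
    by (simp add: W_def fls_times_fps_to_fls mult_ac)
  finally show ?thesis
    by (simp add: fls_X_times_X_inv U_times_V)
qed

sublocale laurent_substitution W L
  by unfold_locales (rule W_0, rule L_times_W)

definition F_st :: "nat \<Rightarrow> 'a" where
  "F_st n = Ds (Dt n F)"

definition h :: "'a fps" where
  "h = Abs_fps (\<lambda>n. if n = 0 then 0 else (1 / real n) *\<^sub>R Dt n F)"

definition h_t :: "nat \<Rightarrow> 'a fps" where
  "h_t m = fps_cmap (Dt m) h"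

definition logE :: "'a fps" where
  "logE = Abs_fps (\<lambda>n. if n = 0 then 0 else - ((1 / real n) *\<^sub>R Ds (Dt n F)))"

lemma logE_0: "logE $ 0 = 0"
  by (simp add: logE_def)

lemma E_eq: "E = exp_series oo logE"
  by (simp add: kser_def ser_exp_eq_compose logE_def)

lemma E_0: "E $ 0 = 1"
  by (simp add: E_eq exp_series_def)

lemma fps_deriv_E: "fps_deriv E = fps_deriv logE * E"
  unfolding E_eq by (rule fps_deriv_compose_exp_like[OF fps_deriv_exp_series logE_0])

lemma fps_cmap_E: "derivation D \<Longrightarrow> fps_cmap D E = fps_cmap D logE * E"
  unfolding E_eq by (rule fps_cmap_compose_exp_series[OF _ logE_0])

lemma logE_eq: "logE = - fps_cmap Ds h"
  by (simp add: fps_eq_iff logE_def h_def derivation_scaleR[OF derivation_s] derivation_s)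

lemma h_t_nth: "m \<ge> 1 \<Longrightarrow> h_t m $ n = (if n = 0 then 0 else (1 / real n) *\<^sub>R Dt m (Dt n F))"
  by (simp add: h_t_def h_def derivation_scaleR[OF derivation_t] derivation_t)

lemma h_t_0: "m \<ge> 1 \<Longrightarrow> h_t m $ 0 = 0"
  by (simp add: h_t_nth)

subsection \<open>The bilinear identity as a logarithmic derivative\<close>

text \<open>Multiplied by \<open>X = z\<^sub>1\<^sup>-\<^sup>1\<close>, the bilinear identity reads \<open>Pb = Qb \<cdot> exp Gam\<close>, where the
  coefficients of these power series in \<open>X\<close> are Laurent series in \<open>z\<^sub>2\<^sup>-\<^sup>1\<close>.\<close>
definition zE :: "'a fls" where
  "zE = fls_X_inv * fps_to_fls E"

definition Pb :: "'a fls fps" where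
  "Pb = fls_const_coeffs E - fps_X * fps_const zE"

definition Qb :: "'a fls fps" where
  "Qb = 1 - fps_X * fps_const fls_X_inv"

definition Gam :: "'a fls fps" where
  "Gam = fps_to_fls_coeffs (Gser Dt F)"

definition geom :: "'a fls fps" where
  "geom = Abs_fps (\<lambda>m. if m = 0 then 0 else fls_X_inv ^ m)"

definition Psi :: "'a fls fps" where
  "Psi = Abs_fps (\<lambda>m. if m = 0 then 0 else fls_X_inv ^ m - fps_to_fls (h_t m))"

lemma Gser_0: "Gser Dt F $ 0 = 0"
  by (simp add: Gser_def fps_eq_iff)

lemma Gam_0: "Gam $ 0 = 0"
  by (simp add: Gam_def Gser_0)

lemma bilinear_factorization: "Pb = Qb * (fls_const_coeffs exp_series oo Gam)"
proof -
  define Om where "Om = fls_const_coeffs exp_series oo Gam"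
  have bil: "fls_X_inv * fps_to_fls (fls_const_coeffs E) - fls_const zE
      = (fls_X_inv - fls_const fls_X_inv) * fps_to_fls Om"
    using bilinear fps_to_fls_coeffs_ser_exp2[OF Gser_0]
    by (simp add: bilinear_identity_def lift1_def lift2_def fls_const_coeffs_def
        fps_to_fls_coeffs_def Gam_def zE_def Om_def)
  have "fps_to_fls Pb = (fls_X * fls_X_inv) * fps_to_fls (fls_const_coeffs E) - fls_X * fls_const zE"
    by (simp add: Pb_def fls_times_fps_to_fls fls_X_times_X_inv)
  also have "\<dots> = fls_X * (fls_X_inv * fps_to_fls (fls_const_coeffs E) - fls_const zE)"
    by (simp only: right_diff_distrib mult.assoc)
  also have "\<dots> = ((fls_X * fls_X_inv) - fls_X * fls_const fls_X_inv) * fps_to_fls Om"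
    by (simp only: bil mult.assoc[symmetric] right_diff_distrib)
  also have "\<dots> = fps_to_fls (Qb * Om)"
    by (simp add: Qb_def fls_times_fps_to_fls fls_X_times_X_inv)
  finally show ?thesis
    by (simp add: Om_def)
qed

lemma h_t_eq_Gser: "m \<ge> 1 \<Longrightarrow> h_t m = of_nat m * Gser Dt F $ m"
proof (rule fps_ext)
  fix n
  assume m: "m \<ge> 1"
  have "of_nat m * (x::'a) = real m *\<^sub>R x" for x
    by (simp add: scaleR_conv_of_real)
  moreover have "1 / (real m * real n) * real m = 1 / real n"
    using m by simp
  ultimately show "h_t m $ n = (of_nat m * Gser Dt F $ m) $ n"
    using m by (simp add: h_t_nth Gser_def)
qed

lemma Psi_eq: "Psi = geom - fps_X * fps_deriv Gam"
proof (rule fps_ext)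
  fix m
  show "Psi $ m = (geom - fps_X * fps_deriv Gam) $ m"
  proof (cases m)
    case (Suc k)
    then have "fps_to_fls (h_t m) = of_nat m * Gam $ m"
      by (simp add: h_t_eq_Gser fls_times_fps_to_fls fps_to_fls_of_nat Gam_def)
    then show ?thesis
      using Suc by (simp add: Psi_def geom_def)
  qed (simp add: Psi_def geom_def)
qed

lemma Qb_times_geom: "Qb * geom = fps_X * fps_const fls_X_inv"
proof (rule fps_ext)
  fix m
  show "(Qb * geom) $ m = (fps_X * fps_const fls_X_inv) $ m"
  proof (cases m)
    case (Suc k)
    then show ?thesis by (cases k) (simp_all add: Qb_def geom_def algebra_simps)
  qed (simp add: Qb_def geom_def)
qed

text \<open>\<open>-X Qb'/Qb = geom\<close> and \<open>X (exp Gam)'/exp Gam = X Gam'\<close>, so \<open>Psi = -X Pb'/Pb\<close>.\<close>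
lemma Pb_log_deriv: "Pb * Psi = - (fps_X * fps_deriv Pb)"
proof -
  define Om where "Om = fls_const_coeffs exp_series oo Gam"
  have Om_deriv: "fps_deriv Om = fps_deriv Gam * Om"
    unfolding Om_def
    by (rule fps_deriv_compose_exp_like[OF _ Gam_0])
       (simp add: fps_deriv_fls_const_coeffs fps_deriv_exp_series)
  have Pb: "Pb = Qb * Om"
    unfolding Om_def by (rule bilinear_factorization)
  have "Pb * Psi = Om * (Qb * geom) - fps_X * (Qb * (fps_deriv Gam * Om))"
    by (simp add: Pb Psi_eq algebra_simps)
  also have "\<dots> = Om * (fps_X * fps_const fls_X_inv) - fps_X * (Qb * fps_deriv Om)"
    by (simp only: Qb_times_geom Om_deriv)
  also have "\<dots> = - (fps_X * (fps_deriv Qb * Om + Qb * fps_deriv Om))"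
    by (simp add: Qb_def algebra_simps del: fps_const_neg)
  also have "\<dots> = - (fps_X * fps_deriv Pb)"
    by (simp add: Pb add.commute)
  finally show ?thesis .
qed

definition PbL :: "'a fls fps" where
  "PbL = fls_const_coeffs E - fps_X * fps_const fls_X_inv"

definition PsiL :: "'a fls fps" where
  "PsiL = Abs_fps (\<lambda>j. if j = 0 then 0 else L ^ j - at_W (h_t j))"

lemma at_L_zE: "at_L zE = fls_X_inv"
  using at_L_X_inv_power_times[of 1 E] L_times_E_at_W by (simp add: zE_def at_W_def)

lemma Pb_nth: "Pb $ i = fls_const (E $ i) - (if i = 1 then zE else 0)"
  by (cases i) (simp_all add: Pb_def)

lemma PbL_nth: "PbL $ i = fls_const (E $ i) - (if i = 1 then fls_X_inv else 0)"
  by (cases i) (simp_all add: PbL_def)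

lemma PbL_nth_0: "PbL $ i $$ 0 = E $ i"
  by (simp add: PbL_nth)

lemma at_L_Pb_nth: "at_L (Pb $ i) = PbL $ i"
  by (simp add: Pb_nth PbL_nth at_L_diff at_L_zE)

lemma at_L_Psi_nth: "at_L (Psi $ j) = PsiL $ j"
  by (simp add: Psi_def PsiL_def at_L_diff at_L_power at_L_fps at_W_def)

lemma PbL_log_deriv: "PbL * PsiL = - (fps_X * fps_deriv PbL)"
proof (rule fps_ext)
  fix n
  have "(PbL * PsiL) $ n = at_L ((Pb * Psi) $ n)"
    by (simp add: fps_mult_nth at_L_sum at_L_mult at_L_Pb_nth at_L_Psi_nth)
  also have "\<dots> = at_L ((- (fps_X * fps_deriv Pb)) $ n)"
    by (simp only: Pb_log_deriv)
  also have "\<dots> = (- (fps_X * fps_deriv PbL)) $ n"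
    by (simp only: fps_neg_nth fps_X_times_deriv_nth at_L_uminus) (simp add: at_L_mult at_L_Pb_nth)
  finally show "(PbL * PsiL) $ n = (- (fps_X * fps_deriv PbL)) $ n" .
qed

subsection \<open>The coefficients of \<open>PsiL\<close> are polynomials in \<open>k\<close>\<close>

lemma PsiL_recursion:
  assumes "m \<ge> 1"
  shows "PsiL $ m = - (of_nat m * PbL $ m) - (\<Sum>i = 1..m. PbL $ i * PsiL $ (m - i))"
proof -
  have "PsiL $ m + (\<Sum>i = 1..m. PbL $ i * PsiL $ (m - i)) = (PbL * PsiL) $ m"
    by (simp add: fps_mult_nth sum.atLeast_Suc_atMost PbL_nth E_0)
  also have "\<dots> = - (of_nat m * PbL $ m)"
    using assms by (simp only: PbL_log_deriv fps_neg_nth fps_X_times_deriv_nth) simp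
  finally show ?thesis
    by (simp only: eq_diff_eq add.commute)
qed

lemma k_polynomial_PbL: "k_polynomial (PbL $ i)"
  by (simp add: PbL_nth k_polynomial_diff)

lemma k_polynomial_PsiL: "k_polynomial (PsiL $ m)"
proof (induct m rule: less_induct)
  case (less m)
  show ?case
  proof (cases "m = 0")
    case True
    then show ?thesis by (simp add: PsiL_def)
  next
    case False
    have "k_polynomial (PsiL $ (m - i))" if "i \<in> {1..m}" for i
      using that False by (intro less) auto
    then have "k_polynomial (- (of_nat m * PbL $ m) - (\<Sum>i = 1..m. PbL $ i * PsiL $ (m - i)))"
      by (intro k_polynomial_diff k_polynomial_uminus k_polynomial_mult k_polynomial_sum
          k_polynomial_PbL k_polynomial_of_nat)
    moreover have "PsiL $ m = - (of_nat m * PbL $ m) - (\<Sum>i = 1..m. PbL $ i * PsiL $ (m - i))"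
      using False by (intro PsiL_recursion) simp
    ultimately show ?thesis
      by (simp only:)
  qed
qed

lemma PsiL_constant_terms: "Abs_fps (\<lambda>m. PsiL $ m $$ 0) = - (fps_X * fps_deriv logE)"
proof -
  define PsiL0 where "PsiL0 = Abs_fps (\<lambda>m. PsiL $ m $$ 0)"
  have "E * PsiL0 = - (fps_X * fps_deriv E)"
  proof (rule fps_ext)
    fix n
    have "(E * PsiL0) $ n = ((PbL * PsiL) $ n) $$ 0"
      by (simp add: fps_mult_nth fls_nth_sum PbL_nth_0 PsiL0_def
          k_polynomial_mult_nth_0[OF k_polynomial_PbL k_polynomial_PsiL])
    also have "\<dots> = (- (fps_X * fps_deriv E)) $ n"
      by (simp only: PbL_log_deriv fps_neg_nth fps_X_times_deriv_nth) (simp add: fls_of_nat PbL_nth_0)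
    finally show "(E * PsiL0) $ n = (- (fps_X * fps_deriv E)) $ n" .
  qed
  then have "E * (PsiL0 + fps_X * fps_deriv logE) = 0"
    by (simp add: fps_deriv_E algebra_simps)
  then have "fps_right_inverse E 1 * E * (PsiL0 + fps_X * fps_deriv logE) = 0"
    by (simp only: mult.assoc mult_zero_right)
  then show ?thesis
    unfolding PsiL0_def[symmetric]
    by (simp only: mult.commute[of _ E] fps_right_inverse E_0 mult_1_left eq_neg_iff_add_eq_0)
qed

lemma PsiL_nth_0:
  assumes m: "m \<ge> 1"
  shows "PsiL $ m $$ 0 = F_st m"
proof -
  have "PsiL $ m $$ 0 = of_nat m * ((1 / real m) *\<^sub>R Ds (Dt m F))"
    using m arg_cong[where f = "\<lambda>A. A $ m", OF PsiL_constant_terms] by (simp add: logE_def)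
  also have "\<dots> = real m *\<^sub>R ((1 / real m) *\<^sub>R Ds (Dt m F))"
    by (simp only: scaleR_conv_of_real of_real_of_nat_eq)
  also have "\<dots> = (real m * (1 / real m)) *\<^sub>R Ds (Dt m F)"
    by (simp only: scaleR_scaleR)
  also have "\<dots> = F_st m"
    using m by (simp add: F_st_def)
  finally show ?thesis .
qed

text \<open>\<open>PsiL\<^sub>m\<close> is the polynomial part of \<open>L\<^sup>m\<close>, and \<open>h\<^sub>m(1/L)\<close> has only negative powers of \<open>k\<close>.\<close>
lemma at_W_h_t:
  assumes m: "m \<ge> 1"
  shows "at_W (h_t m) = L ^ m - proj_pos (L ^ m) - fls_const (F_st m)"
proof (rule fls_eqI)
  fix j
  have PsiL: "PsiL $ m $$ j = (L ^ m) $$ j - at_W (h_t m) $$ j"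
    using m by (simp add: PsiL_def)
  consider "j > 0" | "j = 0" | "j < 0" by linarith
  then show "at_W (h_t m) $$ j = (L ^ m - proj_pos (L ^ m) - fls_const (F_st m)) $$ j"
  proof cases
    case 1
    then show ?thesis
      using PsiL k_polynomial_PsiL[of m] by (simp add: k_polynomial_def)
  next
    case 2
    then show ?thesis
      using PsiL PsiL_nth_0[OF m] m by (simp add: at_W_def h_t_0)
  qed (simp add: at_W_def)
qed

end

section \<open>The Lax equations\<close>

text \<open>Eliminations in an arbitrary commutative ring, applied below to Laurent series.\<close>

lemma elim_implicit_derivative:
  fixes DL L e e1 w w' k x t Dw dL :: "'a::comm_ring_1"
  assumes h1: "L * (e * t + e1 * Dw) + DL * e = 0"
    and h2: "L * Dw + DL * w = 0"
    and h3: "L * (e1 * w') + dL * e = - (k^2)"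
    and h4: "L * w' + dL * w = 0"
    and a: "L * e = k" and xk: "x * k = 1"
  shows "DL = x * dL * t"
proof -
  have "k*t + DL*(e - w*e1) = (L*(e*t + e1*Dw) + DL*e) - t*(L*e - k) - e1*(L*Dw + DL*w)"
    by (simp add: algebra_simps)
  then have A1: "k*t + DL*(e - w*e1) = 0"
    using h1 h2 a by simp
  have "dL*(e - w*e1) + k^2 = (L*(e1*w') + dL*e + k^2) - e1*(L*w' + dL*w)"
    by (simp add: algebra_simps)
  then have A2: "dL*(e - w*e1) + k^2 = 0"
    using h3 h4 by simp
  have "DL*k^2 - dL*k*t = DL*(dL*(e - w*e1) + k^2) - dL*(k*t + DL*(e - w*e1))"
    by (simp add: algebra_simps)
  then have B: "DL*k^2 - dL*k*t = 0"
    using A1 A2 by simp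
  have "DL - x*dL*t = x^2*(DL*k^2 - dL*k*t) - DL*((x*k)^2 - 1) + x*dL*t*(x*k - 1)"
    by (simp add: algebra_simps power2_eq_square)
  then show ?thesis
    using B xk by simp
qed

lemma elim_implicit_derivative_inverse:
  fixes DL L w w' x t Dw dL :: "'a::comm_ring_1"
  assumes h2: "L * Dw + DL * w = 0" and h4: "L * w' + dL * w = 0"
    and b: "L * w = 1" and DL: "DL = x * dL * t"
  shows "Dw = x * w' * t"
proof -
  have "Dw - x * w' * t = Dw * (1 - L * w) + w * (L * Dw + DL * w) - w * w * (DL - x * dL * t)
      - x * t * (w' * (1 - L * w) + w * (L * w' + dL * w))"
    by (simp add: algebra_simps)
  then show ?thesis
    using h2 h4 b DL by simp
qed

lemma elim_velocity_t:
  fixes x k dL tx tm DxB dB c mm Lm1 :: "'a::comm_ring_1"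
  assumes xk: "x * k = 1"
    and eq: "(mm*Lm1*(x*dL*tx) - DxB - c) - x*(mm*Lm1*dL - dB)*tx = (x*dL*tm - c) - x*(dL + k^2)*tm"
  shows "tm = x*DxB - x^2*dB*tx"
proof -
  have "DxB - x*dB*tx - x*k^2*tm = ((x*dL*tm - c) - x*(dL + k^2)*tm)
      - ((mm*Lm1*(x*dL*tx) - DxB - c) - x*(mm*Lm1*dL - dB)*tx)"
    by (simp add: algebra_simps)
  then have e: "x*k^2*tm = DxB - x*dB*tx"
    using eq by simp
  have "tm = (x*k)^2 * tm - ((x*k)^2 - 1) * tm"
    by (simp add: algebra_simps)
  also have "\<dots> = x * (x*k^2*tm) - ((x*k)^2 - 1) * tm"
    by (simp add: algebra_simps power2_eq_square)
  also have "\<dots> = x * (DxB - x*dB*tx) - ((x*k)^2 - 1) * tm"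
    by (simp only: e)
  also have "(x*k)^2 - 1 = 0"
    using xk by simp
  also have "x * (DxB - x*dB*tx) - 0 * tm = x*DxB - x^2*dB*tx"
    by (simp add: algebra_simps power2_eq_square)
  finally show ?thesis .
qed

lemma elim_Lax_s:
  fixes x k dL ts tx s1 :: "'a::comm_ring_1"
  assumes tx: "tx = s1 + x*k^2*ts" and xk: "x*k = 1"
  shows "x*dL*ts = x*(x*dL*tx) - (- s1) * (- (x^2*dL))"
proof -
  have "x*(x*dL*tx) - (- s1) * (- (x^2*dL)) - x*dL*ts
      = x^2*dL*(tx - s1 - x*k^2*ts) + x*dL*ts*((x*k)^2 - 1)"
    by (simp add: algebra_simps power2_eq_square)
  also have "\<dots> = 0"
    using assms by simp
  finally show ?thesis
    by simp
qed

lemma elim_logP_t: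
  fixes x k tm tx ts DsB DxB dB sm s1 :: "'a::comm_ring_1"
  assumes e1: "tm = DsB + sm - x*dB*ts" and e2: "tm = x*DxB - x^2*dB*tx"
    and e3: "tx = s1 + x*k^2*ts" and xk: "x*k = 1"
  shows "- sm = DsB - (x*DxB - (- s1) * (- (x^2*dB)))"
proof -
  have "DsB - (x*DxB - (- s1) * (- (x^2*dB))) + sm
      = - (tm - (DsB + sm - x*dB*ts)) + (tm - (x*DxB - x^2*dB*tx))
        - x^2*dB*(tx - (s1 + x*k^2*ts)) - x*dB*ts*(x*k + 1)*(x*k - 1)"
    by (simp add: algebra_simps power2_eq_square)
  also have "\<dots> = 0"
  proof -
    have "tm - (DsB + sm - x*dB*ts) = 0" "tm - (x*DxB - x^2*dB*tx) = 0"
      "tx - (s1 + x*k^2*ts) = 0" "x*k - 1 = 0"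
      using assms by simp_all
    then show ?thesis
      by (simp only: mult_zero_right minus_zero add_0 diff_0 diff_zero)
  qed
  finally have "DsB - (x*DxB - (- s1) * (- (x^2*dB))) = - sm"
    by (simp only: eq_neg_iff_add_eq_0)
  then show ?thesis
    by (rule sym)
qed

context dispersionless_tau
begin

text \<open>The velocity of \<open>L\<close> along a derivation \<open>D\<close>: by \<open>cmap_L\<close> below,
  \<open>D L = X \<cdot> L' \<cdot> velocity D\<close>, where \<open>'\<close> is the derivative in \<open>X = k\<^sup>-\<^sup>1\<close>.\<close>
definition velocity :: "('a \<Rightarrow> 'a) \<Rightarrow> 'a fls" where
  "velocity D = at_W (fps_cmap D logE)"

lemma at_W_uminus: "at_W (- B) = - at_W B"
  by (simp add: at_W_def fps_compose_uminus)

lemma fls_deriv_at_W: "fls_deriv (at_W B) = at_W (fps_deriv B) * fps_to_fls (fps_deriv W)"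
  by (simp add: at_W_def fls_deriv_fps_to_fls fps_compose_deriv_cring[OF W_0] fls_times_fps_to_fls)

lemma cmap_at_W_expand:
  assumes "derivation D"
  shows "cmap D (at_W B) = at_W (fps_cmap D B) + at_W (fps_deriv B) * cmap D (fps_to_fls W)"
  by (simp add: at_W_def cmap_fps_to_fls[OF assms] fps_cmap_compose[OF assms W_0] fls_times_fps_to_fls)

text \<open>Apply \<open>D\<close> and \<open>d/dX\<close> to \<open>L \<cdot> E(W) = k\<close> and \<open>L \<cdot> W = 1\<close> and eliminate.\<close>
lemma cmap_L:
  assumes D: "derivation D"
  shows "cmap D L = fls_X * fls_deriv L * velocity D"
    and "cmap D (fps_to_fls W) = fls_X * fps_to_fls (fps_deriv W) * velocity D"
proof -
  define e e1 w w' where "e = at_W E" and "e1 = at_W (fps_deriv E)"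
    and "w = fps_to_fls W" and "w' = fps_to_fls (fps_deriv W)"
  have a: "L * e = fls_X_inv"
    using L_times_E_at_W by (simp add: e_def)
  have b: "L * w = 1"
    using L_times_W by (simp add: w_def)
  have "at_W (fps_cmap D E) = e * velocity D"
    by (simp add: fps_cmap_E[OF D] e_def velocity_def at_W_def fps_compose_mult_distrib_cring[OF W_0]
        fls_times_fps_to_fls mult.commute)
  then have ce: "cmap D e = e * velocity D + e1 * cmap D w"
    by (simp add: e_def e1_def w_def cmap_at_W_expand[OF D])
  have h1: "L * (e * velocity D + e1 * cmap D w) + cmap D L * e = 0"
    using arg_cong[where f = "cmap D", OF a] by (simp add: cmap_mult[OF D] ce cmap_X_inv[OF D])
  have h2: "L * cmap D w + cmap D L * w = 0"
    using arg_cong[where f = "cmap D", OF b] by (simp add: cmap_mult[OF D] cmap_one[OF D])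
  have h3: "L * (e1 * w') + fls_deriv L * e = - (fls_X_inv ^ 2)"
    using arg_cong[where f = "fls_deriv", OF a] by (simp add: e_def e1_def w'_def fls_deriv_at_W)
  have h4: "L * w' + fls_deriv L * w = 0"
    using arg_cong[where f = "fls_deriv", OF b] by (simp add: w_def w'_def fls_deriv_fps_to_fls)
  show L: "cmap D L = fls_X * fls_deriv L * velocity D"
    by (rule elim_implicit_derivative[OF h1 h2 h3 h4 a fls_X_times_X_inv])
  show "cmap D (fps_to_fls W) = fls_X * fps_to_fls (fps_deriv W) * velocity D"
    using elim_implicit_derivative_inverse[OF h2 h4 b L] by (simp add: w_def w'_def)
qed

lemma cmap_at_W:
  assumes "derivation D"
  shows "cmap D (at_W B) = at_W (fps_cmap D B) + fls_X * fls_deriv (at_W B) * velocity D"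
  by (simp add: cmap_at_W_expand[OF assms] cmap_L(2)[OF assms] fls_deriv_at_W mult_ac)

lemma at_W_cmap_s_h_t: "m \<ge> 1 \<Longrightarrow> at_W (fps_cmap Ds (h_t m)) = - velocity (Dt m)"
  by (simp add: velocity_def logE_eq h_t_def fps_cmap_uminus[OF derivation_t] at_W_uminus
      fps_cmap_commute[of "Dt m" Ds] s_t_commute)

lemma proj_pos_L: "proj_pos L = fls_X_inv"
proof (rule fls_eqI)
  fix j
  show "proj_pos L $$ j = fls_X_inv $$ j"
    using L_nth_minus_1 L_nth_below[of j] by (cases "j < -1"; cases "j = -1") auto
qed

lemma Dt_log_p0: "m \<ge> 1 \<Longrightarrow> Dt m (- Ds (Ds F)) = - Ds (F_st m)"
  by (simp add: F_st_def derivation_uminus[OF derivation_t] s_t_commute)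

lemma velocity_t:
  assumes m: "m \<ge> 1"
  defines "B \<equiv> proj_pos (L ^ m)"
  shows "velocity (Dt m) = fls_X * cmap Dx B - fls_X^2 * fls_deriv B * velocity Dx"
proof -
  have one: "(1::nat) \<ge> 1" by simp
  have "fps_cmap Dx (h_t m) = fps_cmap (Dt m) (h_t 1)"
    unfolding h_t_def using m by (intro fps_cmap_commute) (simp add: t_t_commute)
  moreover note cmap_at_W[OF derivation_x, of "h_t m"] cmap_at_W[OF derivation_t[OF m], of "h_t 1"]
  ultimately have eq: "cmap Dx (at_W (h_t m)) - fls_X * fls_deriv (at_W (h_t m)) * velocity Dx
      = cmap (Dt m) (at_W (h_t 1)) - fls_X * fls_deriv (at_W (h_t 1)) * velocity (Dt m)"
    by simp
  have hm: "at_W (h_t m) = L ^ m - B - fls_const (F_st m)"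
    unfolding B_def using m by (rule at_W_h_t)
  have h1: "at_W (h_t 1) = L - fls_X_inv - fls_const (F_st 1)"
    using at_W_h_t[OF one] by (simp add: proj_pos_L)
  have "Dt m (F_st 1) = Dx (F_st m)"
    using m by (simp add: F_st_def s_t_commute t_t_commute)
  then have "(of_nat m * L ^ (m - 1) * (fls_X * fls_deriv L * velocity Dx) - cmap Dx B
        - fls_const (Dx (F_st m)))
      - fls_X * (of_nat m * L ^ (m - 1) * fls_deriv L - fls_deriv B) * velocity Dx
      = (fls_X * fls_deriv L * velocity (Dt m) - fls_const (Dx (F_st m)))
        - fls_X * (fls_deriv L + fls_X_inv^2) * velocity (Dt m)"
    using eq unfolding hm h1
    by (simp only: cmap_diff[OF derivation_x] cmap_power[OF derivation_x] cmap_const[OF derivation_x]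
        cmap_diff[OF derivation_t[OF m]] cmap_X_inv[OF derivation_t[OF m]] cmap_const[OF derivation_t[OF m]]
        cmap_L(1)[OF derivation_x] cmap_L(1)[OF derivation_t[OF m]]
        fls_deriv_sub fls_deriv_power fls_deriv_const fls_deriv_X_inv diff_zero diff_minus_eq_add)
  then show ?thesis
    by (rule elim_velocity_t[OF fls_X_times_X_inv])
qed

lemma velocity_t_via_s:
  assumes m: "m \<ge> 1"
  defines "B \<equiv> proj_pos (L ^ m)"
  shows "velocity (Dt m) = cmap Ds B + fls_const (Ds (F_st m)) - fls_X * fls_deriv B * velocity Ds"
proof -
  have hm: "at_W (h_t m) = L ^ m - B - fls_const (F_st m)"
    unfolding B_def using m by (rule at_W_h_t)
  have "of_nat m * L ^ (m - 1) * (fls_X * fls_deriv L * velocity Ds) - cmap Ds B - fls_const (Ds (F_st m))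
      = - velocity (Dt m) + fls_X * (of_nat m * L ^ (m - 1) * fls_deriv L - fls_deriv B) * velocity Ds"
    using cmap_at_W[OF derivation_s, of "h_t m"] unfolding hm at_W_cmap_s_h_t[OF m]
    by (simp only: cmap_diff[OF derivation_s] cmap_power[OF derivation_s] cmap_const[OF derivation_s]
        cmap_L(1)[OF derivation_s] fls_deriv_sub fls_deriv_power fls_deriv_const diff_zero)
  then show ?thesis
    by (simp add: algebra_simps)
qed

lemma velocity_x: "velocity Dx = fls_const (Ds (F_st 1)) + fls_X * fls_X_inv^2 * velocity Ds"
  using velocity_t_via_s[of 1]
  by (simp only: power_one_right proj_pos_L cmap_X_inv[OF derivation_s] fls_deriv_X_inv)
     (simp add: algebra_simps)

lemma Lax_t:
  assumes n: "n \<ge> 1"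
  shows "cmap (Dt n) L = pbr Dx (proj_pos (L ^ n)) L"
proof -
  have "cmap (Dt n) L = fls_X * fls_deriv L * velocity (Dt n)"
    by (rule cmap_L(1)[OF derivation_t[OF n]])
  also have "\<dots> = (- (fls_X^2 * fls_deriv (proj_pos (L ^ n)))) * (fls_X * fls_deriv L * velocity Dx)
      - cmap Dx (proj_pos (L ^ n)) * (- (fls_X^2 * fls_deriv L))"
    by (simp add: velocity_t[OF n] algebra_simps power2_eq_square)
  also have "\<dots> = pbr Dx (proj_pos (L ^ n)) L"
    by (simp only: pbr_def dk_eq cmap_L(1)[OF derivation_x])
  finally show ?thesis .
qed

lemma Lax_s: "cmap Ds L = pbr_logP Dx (- Ds (Ds F)) L"
proof -
  have "cmap Ds L = fls_X * fls_deriv L * velocity Ds"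
    by (rule cmap_L(1)[OF derivation_s])
  also have "\<dots> = fls_X * (fls_X * fls_deriv L * velocity Dx)
      - (- fls_const (Ds (F_st 1))) * (- (fls_X^2 * fls_deriv L))"
    by (rule elim_Lax_s[OF velocity_x fls_X_times_X_inv])
  also have "\<dots> = pbr_logP Dx (- Ds (Ds F)) L"
    by (simp only: pbr_logP_def dk_eq cmap_L(1)[OF derivation_x] Dt_log_p0[OF order_refl]
        fls_const_uminus)
  finally show ?thesis .
qed

lemma logP_t:
  assumes n: "n \<ge> 1"
  shows "fls_const (Dt n (- Ds (Ds F))) =
    cmap Ds (proj_pos (L ^ n)) - pbr_logP Dx (- Ds (Ds F)) (proj_pos (L ^ n))"
proof -
  have "fls_const (Dt n (- Ds (Ds F))) = - fls_const (Ds (F_st n))"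
    by (simp add: Dt_log_p0[OF n])
  also have "\<dots> = cmap Ds (proj_pos (L ^ n)) - (fls_X * cmap Dx (proj_pos (L ^ n))
      - (- fls_const (Ds (F_st 1))) * (- (fls_X^2 * fls_deriv (proj_pos (L ^ n)))))"
    by (rule elim_logP_t[OF velocity_t_via_s[OF n] velocity_t[OF n] velocity_x fls_X_times_X_inv])
  also have "\<dots> = cmap Ds (proj_pos (L ^ n)) - pbr_logP Dx (- Ds (Ds F)) (proj_pos (L ^ n))"
    by (simp add: pbr_logP_def dk_eq Dt_log_p0)
  finally show ?thesis .
qed

end

theorem mainTheorem13:
  fixes Ds :: "'a::{comm_ring_1,real_algebra_1} \<Rightarrow> 'a"
    and Dt :: "nat \<Rightarrow> 'a \<Rightarrow> 'a"
    and F :: 'a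
    and L :: "'a fls"
  assumes "derivation Ds"
    and "\<And>n. n \<ge> 1 \<Longrightarrow> derivation (Dt n)"
    and "\<And>n a. n \<ge> 1 \<Longrightarrow> Ds (Dt n a) = Dt n (Ds a)"
    and "\<And>m n a. m \<ge> 1 \<Longrightarrow> n \<ge> 1 \<Longrightarrow> Dt m (Dt n a) = Dt n (Dt m a)"
    and "bilinear_identity Ds Dt F"
    and "formal_inverse_of (kser Ds Dt F) L"
  shows "dcmKP1 Ds Dt L (- Ds (Ds F))"
proof -
  interpret dispersionless_tau Ds Dt F L
    by unfold_locales (fact assms)+
  show ?thesis
    unfolding dcmKP1_def
    using L_nth_minus_1 L_nth_below Lax_t Lax_s logP_t by blast
qed

end
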